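(* Let $q>1$, let $V=\bigoplus_iV_i$ be a finite-dimensional graded $\mathbb Q_\ell$-vector space and $F$ a semisimple degree-zero linear map on $V$ such that: (i) every eigenvalue of $F$ on $V_i$ (in $\overline{\mathbb Q}_\ell\cong\mathbb C$) has absolute value $q^{i/2}$; (ii) there is a Laurent polynomial $Q_V(t)=\sum_ia_it^i$ such that for all $k\ge0$ the supertrace of $F^k$ on $V$ equals $Q_V(q^k)=\sum_ia_iq^{ki}$. Then $V_{2i+1}=0$ for all $i$, $F$ acts on $V_{2i}$ as multiplication by $q^i$, and $\operatorname{Tr}_{F^k}(V)=Q_V(q^k)=P_V(q^{k/2})$, where $P_V(t)=\sum_i\dim V_i\,t^i$ is the Poincaré polynomial of $V$.
   Context: The supertrace of $F^k$ is $\sum_i(-1)^i\operatorname{Tr}(F^k|_{V_i})$. In the paper $q$ is a power of a prime. *)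

theory Defs
  imports "Jordan_Normal_Form.Char_Poly"
begin

text \<open>A graded finite-dimensional vector space V = \<Oplus>_i V_i with a degree-zero
  endomorphism F is modelled by the dimension function d :: int \<Rightarrow> nat
  (finite support) and the blocks F i, an (d i) x (d i) complex matrix (after
  base change along Q_l-bar = C).\<close>

definition semisimple_mat :: "complex mat \<Rightarrow> bool" where
  "semisimple_mat A \<longleftrightarrow> (\<exists>B. diagonal_mat B \<and> similar_mat A B)"

definition mat_trace :: "complex mat \<Rightarrow> complex" where
  "mat_trace A = (\<Sum>j<dim_row A. A $$ (j, j))"

definition supertrace :: "(int \<Rightarrow> nat) \<Rightarrow> (int \<Rightarrow> complex mat) \<Rightarrow> nat \<Rightarrow> complex" where
  "supertrace d F k = (\<Sum>i\<in>{i. d i \<noteq> 0}. (-1) powi i * mat_trace (F i ^\<^sub>m k))"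

definition laurent_eval :: "(int \<Rightarrow> complex) \<Rightarrow> complex \<Rightarrow> complex" where
  "laurent_eval a t = (\<Sum>i\<in>{i. a i \<noteq> 0}. a i * t powi i)"

definition poincare_eval :: "(int \<Rightarrow> nat) \<Rightarrow> complex \<Rightarrow> complex" where
  "poincare_eval d t = (\<Sum>i\<in>{i. d i \<noteq> 0}. of_nat (d i) * t powi i)"

end

theory Submission
  imports Defs
begin

text \<open>Diagonalising the semisimple blocks, the supertrace of \<open>F\<^sup>k\<close> becomes a signed power
  sum \<open>\<Sum> \<plusminus>\<alpha>\<^sup>k\<close> over the eigenvalues, while \<open>Q\<^sub>V(q\<^sup>k)\<close> is the power sum
  \<open>\<Sum> a\<^sub>m (q\<^sup>m)\<^sup>k\<close>. Power sequences with distinct bases are linearly independent (Vandermonde), so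
  both sides agree base by base. Eigenvalues from different degrees have different absolute
  values, so the signed multiplicity of an eigenvalue \<open>\<alpha>\<close> of \<open>F\<close> on \<open>V\<^sub>i\<close> cannot cancel: hence
  \<open>\<alpha> = q\<^sup>m\<close> for some \<open>m\<close>, and \<open>|\<alpha>| = q\<^bsup>i/2\<^esup>\<close> forces \<open>i = 2m\<close>. Semisimplicity then makes
  \<open>F\<close> scalar on \<open>V\<^sub>2\<^sub>m\<close>, and the supertrace becomes \<open>P\<^sub>V(q\<^bsup>k/2\<^esup>)\<close>.\<close>

lemma mat_trace_mult_comm:
  fixes A B :: "complex mat"
  assumes A: "A \<in> carrier_mat n m" and B: "B \<in> carrier_mat m n"
  shows "mat_trace (A * B) = mat_trace (B * A)"
proof -
  have "mat_trace (A * B) = (\<Sum>i<n. \<Sum>j<m. A $$ (i,j) * B $$ (j,i))"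
    unfolding mat_trace_def using A B
    by (auto simp: scalar_prod_def intro!: sum.cong sum.reindex_bij_witness[of _ id id])
  also have "\<dots> = (\<Sum>j<m. \<Sum>i<n. B $$ (j,i) * A $$ (i,j))"
    by (subst sum.swap) (simp add: mult.commute)
  also have "\<dots> = mat_trace (B * A)"
    unfolding mat_trace_def using A B
    by (auto simp: scalar_prod_def intro!: sum.cong sum.reindex_bij_witness[of _ id id])
  finally show ?thesis .
qed

lemma mat_trace_similar:
  assumes "similar_mat A B"
  shows "mat_trace A = mat_trace B"
proof -
  obtain n P Q where carrier: "{A, B, P, Q} \<subseteq> carrier_mat n n"
    and QP: "Q * P = 1\<^sub>m n" and "A = P * B * Q"
    using similar_matD[OF assms] by blast
  then have "mat_trace A = mat_trace (P * (B * Q))" by (simp add: assoc_mult_mat[of P n n B n Q n])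
  also have "\<dots> = mat_trace (B * Q * P)"
    using carrier by (intro mat_trace_mult_comm[of P n n]) auto
  also have "\<dots> = mat_trace B"
    using carrier QP by (simp add: assoc_mult_mat[of B n n Q n P n] right_mult_one_mat[of B n n])
  finally show ?thesis .
qed

lemma similar_mat_pow:
  assumes "similar_mat A B"
  shows "similar_mat (A ^\<^sub>m k) (B ^\<^sub>m k)"
  using assms similar_mat_wit_pow unfolding similar_mat_def by blast

lemma eigenvalue_similar:
  assumes "similar_mat A (B :: complex mat)"
  shows "eigenvalue A x \<longleftrightarrow> eigenvalue B x"
proof -
  obtain n where "A \<in> carrier_mat n n" "B \<in> carrier_mat n n"
    using similar_matD[OF assms] by blast
  then show ?thesis
    using char_poly_similar[OF assms] by (simp add: eigenvalue_root_char_poly)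
qed

lemma mat_diag_pow: "mat_diag n f ^\<^sub>m k = mat_diag n (\<lambda>j. f j ^ k)"
proof (induction k)
  case 0
  have "dim_row (mat_diag n f) = n" by (simp add: mat_diag_def)
  then show ?case by simp
next
  case (Suc k)
  then show ?case by (simp add: power_Suc2 del: power_Suc)
qed

lemma mat_trace_mat_diag: "mat_trace (mat_diag n f) = (\<Sum>j<n. f j)"
  by (simp add: mat_trace_def mat_diag_def)

lemma eigenvalue_mat_diag: "eigenvalue (mat_diag n f :: complex mat) x \<longleftrightarrow> (\<exists>j<n. f j = x)"
proof -
  have "upper_triangular (mat_diag n f)" by (auto simp: mat_diag_def)
  then have "char_poly (mat_diag n f) = (\<Prod>a\<leftarrow>map f [0..<n]. [:- a, 1:])"
    by (subst char_poly_upper_triangular[OF mat_diag_dim])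
      (auto simp: diag_mat_def mat_diag_def intro!: arg_cong[where f = prod_list])
  then show ?thesis
    by (auto simp: eigenvalue_root_char_poly[OF mat_diag_dim] poly_prod_list prod_list_zero_iff)
qed

lemma diagonal_mat_eq_mat_diag:
  assumes "B \<in> carrier_mat n n" and "diagonal_mat B"
  shows "B = mat_diag n (\<lambda>j. B $$ (j, j))"
  using assms by (auto simp: diagonal_mat_def mat_diag_def)

lemma semisimple_matE:
  assumes "A \<in> carrier_mat n n" and "semisimple_mat A"
  obtains f where "similar_mat A (mat_diag n f)"
proof -
  obtain B where diag: "diagonal_mat B" and sim: "similar_mat A B"
    using assms(2) unfolding semisimple_mat_def by blast
  have "B \<in> carrier_mat n n"
    using similar_matD[OF sim] assms(1) by auto
  then show thesis using that sim diagonal_mat_eq_mat_diag[OF _ diag] by metis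
qed

lemma semisimple_mat_eigenvalues:
  fixes A :: "complex mat"
  assumes "A \<in> carrier_mat n n" and "semisimple_mat A"
  shows "\<exists>e. (\<forall>k. mat_trace (A ^\<^sub>m k) = (\<Sum>j<n. e j ^ k))
    \<and> (\<forall>x. eigenvalue A x \<longleftrightarrow> (\<exists>j<n. e j = x))"
proof -
  obtain f where sim: "similar_mat A (mat_diag n f)"
    using semisimple_matE[OF assms] .
  have "mat_trace (A ^\<^sub>m k) = (\<Sum>j<n. f j ^ k)" for k
    using mat_trace_similar[OF similar_mat_pow[OF sim]] by (simp add: mat_diag_pow mat_trace_mat_diag)
  moreover have "eigenvalue A x \<longleftrightarrow> (\<exists>j<n. f j = x)" for x
    using eigenvalue_similar[OF sim] eigenvalue_mat_diag by simp
  ultimately show ?thesis by blast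
qed

lemma semisimple_mat_scalar:
  fixes A :: "complex mat"
  assumes A: "A \<in> carrier_mat n n" and "semisimple_mat A"
    and single_eigenvalue: "\<And>x. eigenvalue A x \<Longrightarrow> x = c"
  shows "A = c \<cdot>\<^sub>m 1\<^sub>m n"
proof -
  obtain f where sim: "similar_mat A (mat_diag n f)"
    using semisimple_matE[OF assms(1,2)] .
  have "mat_diag n f = c \<cdot>\<^sub>m 1\<^sub>m n"
    using single_eigenvalue eigenvalue_similar[OF sim] eigenvalue_mat_diag
    by (intro eq_matI) (auto simp: mat_diag_def)
  moreover obtain P Q where "similar_mat_wit A (mat_diag n f) P Q"
    using sim unfolding similar_mat_def by blast
  then have P: "P \<in> carrier_mat n n" and Q: "Q \<in> carrier_mat n n"
    and PQ: "P * Q = 1\<^sub>m n" and "A = P * mat_diag n f * Q"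
    using A unfolding similar_mat_wit_def Let_def by auto
  ultimately have "A = P * (c \<cdot>\<^sub>m 1\<^sub>m n) * Q" by simp
  also have "\<dots> = c \<cdot>\<^sub>m (P * Q)"
    using P Q by (simp add: mult_smult_distrib[of P n n "1\<^sub>m n" n] right_mult_one_mat[of P n n]
        mult_smult_assoc_mat[of P n n Q n])
  finally show ?thesis using PQ by simp
qed

lemma power_sums_eq_0_imp_coeffs_eq_0:
  fixes c :: "complex \<Rightarrow> complex"
  assumes "finite S" and "\<And>k. (\<Sum>x\<in>S. c x * x ^ k) = 0" and "x \<in> S"
  shows "c x = 0"
  using assms
proof (induction S arbitrary: c x rule: finite_induct)
  case empty
  then show ?case by simp
next
  case (insert m S)
  have rest: "(\<Sum>x\<in>S. c x * x ^ k) = - c m * m ^ k" for k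
    using insert(1,2) insert.prems(1)[of k] by (simp add: eq_neg_iff_add_eq_0 add.commute)
  \<comment> \<open>Replacing \<open>c x\<close> by \<open>c x * (x - m)\<close> kills the term of \<open>m\<close>.\<close>
  have "(\<Sum>x\<in>S. (c x * (x - m)) * x ^ k) = 0" for k
  proof -
    have "(\<Sum>x\<in>S. (c x * (x - m)) * x ^ k)
        = (\<Sum>x\<in>S. c x * x ^ Suc k) - m * (\<Sum>x\<in>S. c x * x ^ k)"
      by (simp add: sum_distrib_left sum_subtractf algebra_simps)
    also have "\<dots> = 0" unfolding rest by (simp add: algebra_simps)
    finally show ?thesis .
  qed
  then have "\<forall>x\<in>S. c x * (x - m) = 0" using insert.IH[of "\<lambda>x. c x * (x - m)"] by blast
  then have S0: "\<forall>x\<in>S. c x = 0" using insert(2) by auto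
  then have "c m = 0" using rest[of 0] by simp
  then show ?case using S0 insert.prems(2) by auto
qed

lemma power_sum_eq_fiberwise:
  fixes f :: "'a \<Rightarrow> complex"
  assumes "finite J" and "finite L" and "f ` J \<subseteq> L"
  shows "(\<Sum>j\<in>J. v j * f j ^ k) = (\<Sum>y\<in>L. (\<Sum>j\<in>{j\<in>J. f j = y}. v j) * y ^ k)"
proof -
  have "(\<Sum>j\<in>J. v j * f j ^ k) = (\<Sum>y\<in>L. \<Sum>j\<in>{j\<in>J. f j = y}. v j * f j ^ k)"
    by (rule sum.group[OF assms, symmetric])
  also have "\<dots> = (\<Sum>y\<in>L. (\<Sum>j\<in>{j\<in>J. f j = y}. v j) * y ^ k)"
    by (intro sum.cong refl) (simp add: sum_distrib_right)
  finally show ?thesis .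
qed

lemma power_sums_eq_imp_fiber_sums_eq:
  fixes f :: "'a \<Rightarrow> complex" and g :: "'b \<Rightarrow> complex"
  assumes J: "finite J" and K: "finite K"
    and sums_eq: "\<And>k. (\<Sum>j\<in>J. v j * f j ^ k) = (\<Sum>j\<in>K. w j * g j ^ k)"
  shows "(\<Sum>j\<in>{j\<in>J. f j = x}. v j) = (\<Sum>j\<in>{j\<in>K. g j = x}. w j)"
proof (cases "x \<in> f ` J \<union> g ` K")
  case True
  define L where "L = f ` J \<union> g ` K"
  define c where "c y = (\<Sum>j\<in>{j\<in>J. f j = y}. v j) - (\<Sum>j\<in>{j\<in>K. g j = y}. w j)" for y
  have L: "finite L" "f ` J \<subseteq> L" "g ` K \<subseteq> L" using J K by (auto simp: L_def)
  have "(\<Sum>y\<in>L. c y * y ^ k) = 0" for k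
    using sums_eq[of k] power_sum_eq_fiberwise[OF J L(1,2)] power_sum_eq_fiberwise[OF K L(1,3)]
    by (simp add: c_def left_diff_distrib sum_subtractf)
  then have "c x = 0"
    using power_sums_eq_0_imp_coeffs_eq_0[OF L(1)] True by (auto simp: L_def)
  then show ?thesis by (simp add: c_def)
next
  case False
  then have "{j\<in>J. f j = x} = {}" and "{j\<in>K. g j = x} = {}" by auto
  then show ?thesis by (simp only: sum.empty)
qed

lemma laurent_eval_of_real_power:
  "laurent_eval a (complex_of_real (q ^ k)) = (\<Sum>m\<in>{m. a m \<noteq> 0}. a m * complex_of_real (q powi m) ^ k)"
  unfolding laurent_eval_def
  by (simp add: power_int_power power_int_power' mult.commute flip: of_real_power of_real_power_int)

definition eigen_supertrace :: "(int \<Rightarrow> nat) \<Rightarrow> (int \<Rightarrow> nat \<Rightarrow> complex) \<Rightarrow> nat \<Rightarrow> complex" where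
  "eigen_supertrace d e k = (\<Sum>i\<in>{i. d i \<noteq> 0}. (-1) powi i * (\<Sum>j<d i. e i j ^ k))"

lemma eigen_supertrace_laurent_imp_eigenvalue_eq:
  fixes q :: real and d :: "int \<Rightarrow> nat" and e :: "int \<Rightarrow> nat \<Rightarrow> complex"
    and a :: "int \<Rightarrow> complex"
  assumes q: "q > 1" and fin_d: "finite {i. d i \<noteq> 0}" and fin_a: "finite {m. a m \<noteq> 0}"
    and abs_e: "\<And>i j. j < d i \<Longrightarrow> cmod (e i j) = q powr (real_of_int i / 2)"
    and sums: "\<And>k. eigen_supertrace d e k = laurent_eval a (complex_of_real (q ^ k))"
    and j: "j < d i"
  shows "even i \<and> e i j = complex_of_real (q powi (i div 2))"
proof -
  define J where "J = Sigma {i. d i \<noteq> 0} (\<lambda>i. {..<d i})"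
  define x where "x = e i j"
  define S where "S = {p\<in>J. e (fst p) (snd p) = x}"
  have J: "finite J" using fin_d by (simp add: J_def)
  have "(\<Sum>p\<in>J. (-1) powi fst p * e (fst p) (snd p) ^ k)
      = (\<Sum>m\<in>{m. a m \<noteq> 0}. a m * complex_of_real (q powi m) ^ k)" for k
    using sums[of k] fin_d unfolding laurent_eval_of_real_power eigen_supertrace_def
    by (simp add: J_def sum.Sigma split_def sum_distrib_left)
  then have fibers_eq: "(\<Sum>p\<in>S. (-1) powi fst p)
      = (\<Sum>m\<in>{m\<in>{m. a m \<noteq> 0}. complex_of_real (q powi m) = x}. a m)"
    unfolding S_def by (rule power_sums_eq_imp_fiber_sums_eq[OF J fin_a])
  \<comment> \<open>Absolute values separate the degrees, so the signed count of \<open>x\<close> cannot cancel.\<close>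
  have same_degree: "fst p = i" if "p \<in> J" and "e (fst p) (snd p) = x" for p
  proof -
    have "q powr (real_of_int (fst p) / 2) = q powr (real_of_int i / 2)"
      using that abs_e[of "snd p" "fst p"] abs_e[OF j] by (auto simp: J_def x_def)
    then show ?thesis using q by (simp add: powr_inj)
  qed
  have "(i, j) \<in> S" using j by (simp add: S_def J_def x_def)
  then have "card S \<noteq> 0" using J by (auto simp: S_def)
  moreover have "(\<Sum>p\<in>S. (-1) powi fst p) = (\<Sum>p\<in>S. (-1) powi i :: complex)"
    using same_degree by (intro sum.cong) (auto simp: S_def)
  ultimately have "(\<Sum>p\<in>S. (-1) powi fst p) \<noteq> (0 :: complex)" by simp
  with fibers_eq have "{m\<in>{m. a m \<noteq> 0}. complex_of_real (q powi m) = x} \<noteq> {}"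
    by (metis sum.empty)
  then obtain m where m: "complex_of_real (q powi m) = x" by blast
  have "cmod x = q powi m" unfolding m[symmetric] norm_of_real using q by simp
  also have "\<dots> = q powr real_of_int m" using q by (simp add: powr_real_of_int')
  finally have "q powr real_of_int m = q powr (real_of_int i / 2)"
    using abs_e[OF j] by (simp add: x_def)
  then have "i = 2 * m" using q by (simp add: powr_inj)
  with m show ?thesis by (simp add: x_def)
qed

lemma powr_half_power_int_double:
  fixes q :: real
  assumes "q > 0"
  shows "(q powr (real k / 2)) powi (2 * m) = (q powi m) ^ k"
proof -
  have "(q powr (real k / 2)) ^ 2 = q ^ k"
    using assms by (simp add: power2_eq_square powr_realpow flip: powr_add)
  then have "(q powr (real k / 2)) powi (2 * m) = (q ^ k) powi m"
    by (simp add: power_int_mult)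
  then show ?thesis by (simp add: power_int_power power_int_power' mult.commute)
qed

lemma eigen_supertrace_eq_poincare_eval:
  fixes q :: real and d :: "int \<Rightarrow> nat" and e :: "int \<Rightarrow> nat \<Rightarrow> complex"
  assumes q: "q > 0"
    and pure: "\<And>i j. j < d i \<Longrightarrow> even i \<and> e i j = complex_of_real (q powi (i div 2))"
  shows "eigen_supertrace d e k = poincare_eval d (complex_of_real (q powr (real k / 2)))"
  unfolding eigen_supertrace_def poincare_eval_def
proof (intro sum.cong refl)
  fix i assume "i \<in> {i. d i \<noteq> 0}"
  then obtain m where i: "i = 2 * m" using pure[of 0 i] by (auto elim: evenE)
  have "(\<Sum>j<d i. e i j ^ k) = of_nat (d i) * complex_of_real (q powi m) ^ k"
    using pure i by simp
  moreover have "complex_of_real (q powr (real k / 2)) powi i = complex_of_real (q powi m) ^ k"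
    using powr_half_power_int_double[OF q, of k m] i by (metis of_real_power of_real_power_int)
  ultimately show "(-1) powi i * (\<Sum>j<d i. e i j ^ k)
      = of_nat (d i) * complex_of_real (q powr (real k / 2)) powi i"
    using i by (simp add: power_int_mult)
qed

theorem lemma3p4:
  fixes q :: real and d :: "int \<Rightarrow> nat" and F :: "int \<Rightarrow> complex mat"
    and a :: "int \<Rightarrow> complex"
  assumes q: "q > 1"
    and fin_d: "finite {i. d i \<noteq> 0}"
    and F_carrier: "\<And>i. F i \<in> carrier_mat (d i) (d i)"
    and F_ss: "\<And>i. semisimple_mat (F i)"
    and F_abs: "\<And>i c. eigenvalue (F i) c \<Longrightarrow> cmod c = q powr (real_of_int i / 2)"
    and fin_a: "finite {i. a i \<noteq> 0}"
    and trace_formula: "\<And>k::nat. supertrace d F k = laurent_eval a (complex_of_real (q ^ k))"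
  shows "(\<forall>i. d (2 * i + 1) = 0)
    \<and> (\<forall>i. F (2 * i) = complex_of_real (q powi i) \<cdot>\<^sub>m 1\<^sub>m (d (2 * i)))
    \<and> (\<forall>k::nat. supertrace d F k = laurent_eval a (complex_of_real (q ^ k))
         \<and> laurent_eval a (complex_of_real (q ^ k))
             = poincare_eval d (complex_of_real (q powr (real k / 2))))"
proof -
  obtain e where tr: "\<And>i k. mat_trace (F i ^\<^sub>m k) = (\<Sum>j<d i. e i j ^ k)"
    and ev: "\<And>i x. eigenvalue (F i) x \<longleftrightarrow> (\<exists>j<d i. e i j = x)"
    using semisimple_mat_eigenvalues[OF F_carrier F_ss] by metis
  have supertrace_eq: "supertrace d F k = eigen_supertrace d e k" for k
    by (simp add: supertrace_def eigen_supertrace_def tr)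
  have abs_e: "cmod (e i j) = q powr (real_of_int i / 2)" if "j < d i" for i j
    using F_abs ev that by blast
  have sums: "eigen_supertrace d e k = laurent_eval a (complex_of_real (q ^ k))" for k
    using trace_formula supertrace_eq by simp
  have pure: "even i \<and> e i j = complex_of_real (q powi (i div 2))" if "j < d i" for i j
    by (rule eigen_supertrace_laurent_imp_eigenvalue_eq[OF q fin_d fin_a abs_e sums that])
  have "d (2 * i + 1) = 0" for i
    using pure[of 0 "2 * i + 1"] by auto
  moreover have "F (2 * i) = complex_of_real (q powi i) \<cdot>\<^sub>m 1\<^sub>m (d (2 * i))" for i
    by (rule semisimple_mat_scalar[OF F_carrier F_ss]) (use ev pure in auto)
  moreover have "laurent_eval a (complex_of_real (q ^ k))
      = poincare_eval d (complex_of_real (q powr (real k / 2)))" for k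
    using sums eigen_supertrace_eq_poincare_eval[OF _ pure] q by simp
  ultimately show ?thesis using trace_formula by blast
qed

end
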